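(* Let $d\ge2$ and let $n_1\ge n_2\ge n_3\ge n_4\ge0$ be integers with $n_1+n_2+n_3+n_4=2d-4$. Then \[\int_{\mathrm{Gr}(2,d+1)}\sigma_{n_1}\sigma_{n_2}\sigma_{n_3}\sigma_{n_4}(8\sigma_{11}-2\sigma_1^2)=\begin{cases}6 & \text{if } n_1=n_2=n_3=n_4,\\ 4 & \text{if } n_1=n_2\neq n_3=n_4,\\ 2 & \text{if } n_1+n_4=n_2+n_3 \text{ and } n_1\neq n_2,\\ -2 & \text{if } n_1=n_2+n_3+n_4+2,\\ 0 & \text{otherwise.}\end{cases}\]
   Context: $\sigma_{a,b}$ denote the Schubert classes on $\mathrm{Gr}(2,d+1)$, $\sigma_a=\sigma_{a,0}$, with $\sigma_a=0$ for $a>d-1$. *)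

theory Defs
  imports Main
begin

text \<open>Chow ring of Gr(2,d+1), modelled combinatorially in the Schubert basis.
  A class is an integer coefficient function on pairs (a,b); only the pairs with
  d-1 \<ge> a \<ge> b \<ge> 0 (the Schubert classes sigma_{a,b}) are meaningful.\<close>

type_synonym gcls = "nat \<Rightarrow> nat \<Rightarrow> int"

definition valid :: "nat \<Rightarrow> nat \<Rightarrow> nat \<Rightarrow> bool" where
  "valid d a b \<longleftrightarrow> b \<le> a \<and> a \<le> d - 1"

definition schub :: "nat \<Rightarrow> nat \<Rightarrow> nat \<Rightarrow> gcls" where
  "schub d a b = (\<lambda>c e. if c = a \<and> e = b \<and> valid d a b then 1 else 0)"

abbreviation sig :: "nat \<Rightarrow> nat \<Rightarrow> gcls" where
  "sig d a \<equiv> schub d a 0"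

definition cadd :: "gcls \<Rightarrow> gcls \<Rightarrow> gcls" where
  "cadd x y = (\<lambda>c e. x c e + y c e)"

definition csub :: "gcls \<Rightarrow> gcls \<Rightarrow> gcls" where
  "csub x y = (\<lambda>c e. x c e - y c e)"

definition cscale :: "int \<Rightarrow> gcls \<Rightarrow> gcls" where
  "cscale k x = (\<lambda>c e. k * x c e)"

text \<open>Pieri rule: sigma_k * sigma_{a,b} = sum of sigma_{c,e} with c+e = a+b+k,
  a \<le> c \<le> d-1, b \<le> e \<le> a.  Extended linearly.\<close>
definition pieri :: "nat \<Rightarrow> nat \<Rightarrow> gcls \<Rightarrow> gcls" where
  "pieri d k x = (\<lambda>c e. if valid d c e then
     (\<Sum>a\<le>d - 1. \<Sum>b\<le>a. x a b *
        (if c + e = a + b + k \<and> a \<le> c \<and> b \<le> e \<and> e \<le> a then 1 else 0))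
     else 0)"

text \<open>Multiplication by sigma_{a,b}, via Giambelli:
  sigma_{a,0} = sigma_a, and sigma_{a,b} = sigma_a sigma_b - sigma_{a+1} sigma_{b-1} for b \<ge> 1.\<close>
definition mult_schub :: "nat \<Rightarrow> nat \<Rightarrow> nat \<Rightarrow> gcls \<Rightarrow> gcls" where
  "mult_schub d a b x = (if b = 0 then pieri d a x
     else csub (pieri d a (pieri d b x)) (pieri d (a + 1) (pieri d (b - 1) x)))"

definition cmult :: "nat \<Rightarrow> gcls \<Rightarrow> gcls \<Rightarrow> gcls" where
  "cmult d x y = (\<lambda>c e. \<Sum>a\<le>d - 1. \<Sum>b\<le>a. y a b * mult_schub d a b x c e)"

text \<open>Degree (integral over Gr(2,d+1)): the coefficient of the point class sigma_{d-1,d-1}.\<close>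
definition integral_gr :: "nat \<Rightarrow> gcls \<Rightarrow> int" where
  "integral_gr d x = x (d - 1) (d - 1)"

end

theory Submission
  imports Defs
begin

text \<open>By the Pieri rule sigma_1^2 = sigma_2 + sigma_{1,1}, so the class 8 sigma_{1,1} - 2 sigma_1^2
  equals 6 sigma_{1,1} - 2 sigma_2, and integrating a class against it reads off six times its
  coefficient at sigma_{d-2,d-2} minus twice its coefficient at sigma_{d-1,d-3}, the Poincare duals
  of sigma_{1,1} and sigma_2. One Pieri step for sigma_{n4} expresses these two coefficients through
  at most four coefficients of sigma_{n1} sigma_{n2} sigma_{n3}, and each of those counts the integers
  in an explicit interval (two further Pieri steps). What remains is a case analysis in linear
  integer arithmetic.\<close>

lemma pieri_eq_sum:
  "pieri d k x c e = (if valid d c e \<and> k \<le> c + e then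
     (\<Sum>a = max e (c - k)..min c (c + e - k). x a (c + e - k - a)) else 0)"
proof (cases "valid d c e \<and> k \<le> c + e")
  case False
  then show ?thesis
    by (auto simp: pieri_def intro!: sum.neutral)
next
  case True
  let ?I = "{max e (c - k)..min c (c + e - k)}"
  have row: "(\<Sum>b\<le>a. x a b * (if c + e = a + b + k \<and> a \<le> c \<and> b \<le> e \<and> e \<le> a then 1 else 0))
      = (if a \<in> ?I then x a (c + e - k - a) else 0)" for a
    by (subst sum.cong[OF refl, where h = "\<lambda>b. if b = c + e - k - a then
          (if a \<in> ?I then x a b else 0) else 0"]) (use True in \<open>auto simp: sum.delta'\<close>)
  have "pieri d k x c e = (\<Sum>a\<le>d - 1.
      \<Sum>b\<le>a. x a b * (if c + e = a + b + k \<and> a \<le> c \<and> b \<le> e \<and> e \<le> a then 1 else 0))"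
    using True by (simp add: pieri_def)
  also have "\<dots> = (\<Sum>a\<le>d - 1. if a \<in> ?I then x a (c + e - k - a) else 0)"
    by (simp only: row)
  also have "\<dots> = (\<Sum>a\<in>{..d - 1} \<inter> ?I. x a (c + e - k - a))"
    by (rule sum.inter_restrict[symmetric]) simp
  also have "{..d - 1} \<inter> ?I = ?I"
    using True by (auto simp: valid_def)
  finally show ?thesis
    using True by simp
qed

lemma pieri_of_zero: "pieri d k (\<lambda>_ _. 0) = (\<lambda>_ _. 0)"
  by (intro ext) (simp add: pieri_def)

lemma pieri_0: "valid d c e \<Longrightarrow> pieri d 0 x c e = x c e"
  by (simp add: pieri_eq_sum valid_def max_absorb2)

lemma pieri_1:
  "valid d c e \<Longrightarrow> pieri d 1 x c e = (if e < c then x (c - 1) e else 0) + (if 0 < e then x c (e - 1) else 0)"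
proof -
  assume "valid d c e"
  consider "c = 0" "e = 0" | "0 < e" "e = c" | "0 < c" "e = 0" | "0 < e" "e < c"
    using \<open>valid d c e\<close> by (fastforce simp: valid_def)
  then show ?thesis
  proof cases
    case 4
    then have "{max e (c - 1)..min c (c + e - 1)} = {c - 1, c}"
      by auto
    with 4 \<open>valid d c e\<close> show ?thesis
      by (simp add: pieri_eq_sum)
  qed (use \<open>valid d c e\<close> in \<open>simp_all add: pieri_eq_sum\<close>)
qed

lemma pieri_top: "pieri d k x (d - 1) (d - 1) = (if k \<le> d - 1 then x (d - 1) (d - 1 - k) else 0)"
proof (cases "k \<le> d - 1")
  case True
  then have "{max (d - 1) (d - 1 - k)..min (d - 1) (d - 1 + (d - 1) - k)} = {d - 1}"
    by auto
  with True show ?thesis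
    by (simp add: pieri_eq_sum valid_def)
qed (auto simp: pieri_eq_sum valid_def)

lemma pieri_dual_sig11: "k \<le> d - 2 \<Longrightarrow> pieri d k x (d - 2) (d - 2) = x (d - 2) (d - 2 - k)"
proof -
  assume "k \<le> d - 2"
  then have "{max (d - 2) (d - 2 - k)..min (d - 2) (d - 2 + (d - 2) - k)} = {d - 2}"
    by auto
  moreover have "valid d (d - 2) (d - 2)"
    by (simp add: valid_def)
  ultimately show ?thesis
    using \<open>k \<le> d - 2\<close> by (simp add: pieri_eq_sum)
qed

lemma pieri_dual_sig2:
  assumes "3 \<le> d" "k \<le> d - 3"
  shows "pieri d k x (d - 1) (d - 3) = (if 2 \<le> k then x (d - 3) (d - 1 - k) else 0)
    + (if 1 \<le> k then x (d - 2) (d - 2 - k) else 0) + x (d - 1) (d - 3 - k)"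
proof -
  define f where "f a = x a (d - 1 + (d - 3) - k - a)" for a
  have "valid d (d - 1) (d - 3)" "k \<le> d - 1 + (d - 3)" "min (d - 1) (d - 1 + (d - 3) - k) = d - 1"
    using assms by (auto simp: valid_def)
  then have pieri_sum: "pieri d k x (d - 1) (d - 3) = sum f {max (d - 3) (d - 1 - k)..d - 1}"
    unfolding f_def by (simp only: pieri_eq_sum simp_thms if_True)
  consider "k = 0" | "k = 1" | "2 \<le> k"
    by linarith
  then show ?thesis
  proof cases
    case 1
    then have "{max (d - 3) (d - 1 - k)..d - 1} = {d - 1}"
      by auto
    then have "pieri d k x (d - 1) (d - 3) = sum f {d - 1}"
      by (simp only: pieri_sum)
    with 1 show ?thesis
      by (simp add: f_def)
  next
    case 2
    then have "{max (d - 3) (d - 1 - k)..d - 1} = {d - 2, d - 1}"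
      using assms by auto
    then have "pieri d k x (d - 1) (d - 3) = sum f {d - 2, d - 1}"
      by (simp only: pieri_sum)
    with 2 assms show ?thesis
      by (simp add: f_def)
  next
    case 3
    then have "{max (d - 3) (d - 1 - k)..d - 1} = {d - 3, d - 2, d - 1}"
      using assms by auto
    then have "pieri d k x (d - 1) (d - 3) = sum f {d - 3, d - 2, d - 1}"
      by (simp only: pieri_sum)
    moreover have "d - 3 \<noteq> d - 2" "d - 3 \<noteq> d - 1"
      using assms by auto
    ultimately show ?thesis
      using 3 assms by (simp add: f_def)
  qed
qed

lemma pieri_sig:
  assumes "n \<le> m"
  shows "pieri d n (sig d m) a b = (if valid d a b \<and> m \<le> d - 1 \<and> m \<le> a \<and> a + b = m + n then 1 else 0)"
proof (cases "valid d a b \<and> n \<le> a + b")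
  case True
  let ?I = "{max b (a - n)..min a (a + b - n)}"
  have "pieri d n (sig d m) a b = (\<Sum>a'\<in>?I. sig d m a' (a + b - n - a'))"
    using True by (simp add: pieri_eq_sum)
  also have "\<dots> = (\<Sum>a'\<in>?I. if a' = m then (if a + b - n - m = 0 \<and> m \<le> d - 1 then 1 else 0) else 0)"
    by (intro sum.cong refl) (auto simp: schub_def valid_def)
  also have "\<dots> = (if m \<in> ?I \<and> a + b - n - m = 0 \<and> m \<le> d - 1 then 1 else 0)"
    by (simp add: sum.delta)
  finally show ?thesis
    using True assms by (auto simp: valid_def)
qed (auto simp: pieri_eq_sum)

lemma schub_invalid: "\<not> valid d a b \<Longrightarrow> schub d a b = (\<lambda>_ _. 0)"
  by (simp add: schub_def)

lemma cmult_schub: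
  "cmult d x (schub d a b) = (if valid d a b then mult_schub d a b x else (\<lambda>_ _. 0))"
proof (intro ext)
  fix c e
  let ?m = "if valid d a b then mult_schub d a b x c e else 0"
  have row: "(\<Sum>b'\<le>a'. schub d a b a' b' * mult_schub d a' b' x c e) = (if a' = a then ?m else 0)" for a'
  proof -
    have "(\<Sum>b'\<le>a'. schub d a b a' b' * mult_schub d a' b' x c e)
        = (\<Sum>b'\<le>a'. if b' = b then (if a' = a then ?m else 0) else 0)"
      by (intro sum.cong refl) (auto simp: schub_def)
    then show ?thesis
      by (auto simp: valid_def)
  qed
  show "cmult d x (schub d a b) c e = (if valid d a b then mult_schub d a b x else (\<lambda>_ _. 0)) c e"
    by (simp add: cmult_def row valid_def)
qed

lemma cmult_sig: "a \<le> d - 1 \<Longrightarrow> cmult d x (sig d a) = pieri d a x"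
  by (simp add: cmult_schub valid_def mult_schub_def)

lemma cmult_cadd: "cmult d x (cadd y z) = cadd (cmult d x y) (cmult d x z)"
  by (simp add: cmult_def cadd_def distrib_right sum.distrib)

lemma cmult_csub: "cmult d x (csub y z) = csub (cmult d x y) (cmult d x z)"
  by (simp add: cmult_def csub_def left_diff_distrib sum_subtractf)

lemma cmult_cscale: "cmult d x (cscale k y) = cscale k (cmult d x y)"
  by (simp add: cmult_def cscale_def sum_distrib_left mult.assoc)

lemma cmult_zero_left: "cmult d (\<lambda>_ _. 0) y = (\<lambda>_ _. 0)"
proof -
  have "mult_schub d a b (\<lambda>_ _. 0) = (\<lambda>_ _. 0)" for a b
    by (simp add: mult_schub_def csub_def pieri_of_zero)
  then show ?thesis
    by (simp add: cmult_def)
qed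

lemma sig1_square:
  assumes "2 \<le> d"
  shows "cmult d (sig d 1) (sig d 1) = cadd (sig d 2) (schub d 1 1)"
proof (intro ext)
  fix c e
  have "cmult d (sig d 1) (sig d 1) c e = pieri d 1 (sig d 1) c e"
    using assms by (simp add: cmult_sig)
  also have "\<dots> = (if valid d c e \<and> 1 \<le> d - 1 \<and> 1 \<le> c \<and> c + e = 1 + 1 then 1 else 0)"
    by (rule pieri_sig) simp
  finally show "cmult d (sig d 1) (sig d 1) c e = cadd (sig d 2) (schub d 1 1) c e"
    using assms by (auto simp: cadd_def schub_def valid_def)
qed

lemma integral_cmult_sig11:
  assumes "2 \<le> d"
  shows "integral_gr d (cmult d x (schub d 1 1)) = x (d - 2) (d - 2)"
proof -
  have indices: "valid d (d - 1) (d - 2)" "valid d (d - 1) (d - 3)"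
    "1 \<le> d - 1" "d - 1 - 1 = d - 2" "d - 2 < d - 1" "d - 2 - 1 = d - 3" "d - 1 - 2 = d - 3"
    using assms by (auto simp: valid_def)
  have "valid d 1 1"
    using assms by (simp add: valid_def)
  have "mult_schub d 1 1 x = csub (pieri d 1 (pieri d 1 x)) (pieri d 2 (pieri d 0 x))"
    by (simp add: mult_schub_def numeral_2_eq_2)
  then have "integral_gr d (cmult d x (schub d 1 1))
      = pieri d 1 (pieri d 1 x) (d - 1) (d - 1) - pieri d 2 (pieri d 0 x) (d - 1) (d - 1)"
    using \<open>valid d 1 1\<close> by (simp only: cmult_schub if_True integral_gr_def csub_def)
  also have "\<dots> = (x (d - 2) (d - 2) + (if 0 < d - 2 then x (d - 1) (d - 3) else 0))
      - (if 2 \<le> d - 1 then x (d - 1) (d - 3) else 0)"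
    using indices by (simp only: pieri_top pieri_1 pieri_0 if_True)
  finally show ?thesis
    by auto
qed

lemma integral_cmult_sig2: "integral_gr d (cmult d x (sig d 2)) = (if 3 \<le> d then x (d - 1) (d - 3) else 0)"
proof (cases "3 \<le> d")
  case True
  then have "integral_gr d (cmult d x (sig d 2)) = pieri d 2 x (d - 1) (d - 1)"
    by (simp add: cmult_sig integral_gr_def)
  also have "2 \<le> d - 1" "d - 1 - 2 = d - 3"
    using True by auto
  then have "pieri d 2 x (d - 1) (d - 1) = x (d - 1) (d - 3)"
    by (simp only: pieri_top if_True)
  finally show ?thesis
    using True by simp
next
  case False
  then have "\<not> valid d 2 0"
    by (simp add: valid_def)
  with False show ?thesis
    by (simp add: cmult_schub integral_gr_def)
qed

lemma integral_cmult_Y: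
  assumes "2 \<le> d"
  shows "integral_gr d (cmult d x (csub (cscale 8 (schub d 1 1)) (cscale 2 (cmult d (sig d 1) (sig d 1)))))
    = 6 * x (d - 2) (d - 2) - 2 * (if 3 \<le> d then x (d - 1) (d - 3) else 0)"
proof -
  have "integral_gr d (cmult d x (csub (cscale 8 (schub d 1 1)) (cscale 2 (cmult d (sig d 1) (sig d 1)))))
      = 8 * integral_gr d (cmult d x (schub d 1 1))
        - 2 * (integral_gr d (cmult d x (sig d 2)) + integral_gr d (cmult d x (schub d 1 1)))"
    unfolding sig1_square[OF assms] cmult_csub cmult_cscale cmult_cadd
    by (simp add: integral_gr_def csub_def cscale_def cadd_def)
  then show ?thesis
    unfolding integral_cmult_sig11[OF assms] integral_cmult_sig2 by simp
qed

lemma int_card_atLeastAtMost: "int (card {l..u}) = max 0 (int u + 1 - int l)"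
  by simp

text \<open>The coefficient of sigma_{c,e} in sigma_{n1} sigma_{n2} sigma_{n3}: the number of classes
  sigma_{a, n1+n2-a} of sigma_{n1} sigma_{n2} from which sigma_{c,e} arises by the Pieri rule for
  sigma_{n3}.\<close>
definition sig3_coeff :: "int \<Rightarrow> int \<Rightarrow> int \<Rightarrow> int \<Rightarrow> int \<Rightarrow> int" where
  "sig3_coeff n1 n2 n3 c e = max 0 (min c (n1 + n2) + 1 - max (max e (c - n3)) n1)"

lemma pieri_pieri_sig:
  assumes "n2 \<le> n1" "n3 \<le> n2" "n1 \<le> d - 1" "valid d c e" "c + e = n1 + n2 + n3"
  shows "pieri d n3 (pieri d n2 (sig d n1)) c e = sig3_coeff (int n1) (int n2) (int n3) (int c) (int e)"
proof -
  let ?I = "{max e (c - n3)..min c (c + e - n3)}"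
  have "pieri d n3 (pieri d n2 (sig d n1)) c e = (\<Sum>a\<in>?I. pieri d n2 (sig d n1) a (c + e - n3 - a))"
    using assms by (simp only: pieri_eq_sum le_add2 simp_thms if_True)
  also have "\<dots> = (\<Sum>a\<in>?I. if a \<in> {n1..} then 1 else 0)"
    by (intro sum.cong refl) (use assms in \<open>auto simp: pieri_sig valid_def\<close>)
  also have "\<dots> = (\<Sum>a\<in>?I \<inter> {n1..}. 1)"
    by (rule sum.inter_restrict[symmetric]) simp
  also have "\<dots> = int (card (?I \<inter> {n1..}))"
    by simp
  also have "?I \<inter> {n1..} = {max (max e (c - n3)) n1..min c (n1 + n2)}"
    using assms by auto
  also have "int (max (max e (c - n3)) n1) = max (max (int e) (int c - int n3)) (int n1)"
    by (auto simp: max_def of_nat_diff)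
  then have "int (card {max (max e (c - n3)) n1..min c (n1 + n2)}) = sig3_coeff (int n1) (int n2) (int n3) (int c) (int e)"
    unfolding int_card_atLeastAtMost by (simp add: sig3_coeff_def of_nat_min)
  finally show ?thesis .
qed

lemma integral_sig4_cmult_Y:
  fixes d n1 n2 n3 n4 :: nat
  assumes "2 \<le> d" "n2 \<le> n1" "n3 \<le> n2" "n4 \<le> n3" "n1 + n2 + n3 + n4 = 2 * d - 4" "n1 \<le> d - 1"
  defines "T \<equiv> sig3_coeff (int n1) (int n2) (int n3)"
  shows "integral_gr d
           (cmult d (cmult d (cmult d (cmult d (sig d n1) (sig d n2)) (sig d n3)) (sig d n4))
              (csub (cscale 8 (schub d 1 1)) (cscale 2 (cmult d (sig d 1) (sig d 1)))))
    = 6 * T (int d - 2) (int d - 2 - int n4)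
      - 2 * (if 3 \<le> int d then
               (if 2 \<le> int n4 then T (int d - 3) (int d - 1 - int n4) else 0)
             + (if 1 \<le> int n4 then T (int d - 2) (int d - 2 - int n4) else 0)
             + T (int d - 1) (int d - 3 - int n4)
             else 0)"
proof -
  let ?P = "pieri d n3 (pieri d n2 (sig d n1))"
  have P: "?P c e = T (int c) (int e)" if "e \<le> c" "c \<le> d - 1" "c + e = n1 + n2 + n3" for c e
    unfolding T_def using assms that by (intro pieri_pieri_sig) (auto simp: valid_def)
  have "n2 \<le> d - 1" "n3 \<le> d - 1" "n4 \<le> d - 1"
    using assms by linarith+
  then have X: "cmult d (cmult d (cmult d (sig d n1) (sig d n2)) (sig d n3)) (sig d n4) = pieri d n4 ?P"
    by (simp add: cmult_sig)
  have X22: "pieri d n4 ?P (d - 2) (d - 2) = T (int d - 2) (int d - 2 - int n4)"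
    using assms by (simp add: pieri_dual_sig11 P of_nat_diff diff_diff_eq)
  have X13: "pieri d n4 ?P (d - 1) (d - 3) =
      (if 2 \<le> int n4 then T (int d - 3) (int d - 1 - int n4) else 0)
    + (if 1 \<le> int n4 then T (int d - 2) (int d - 2 - int n4) else 0)
    + T (int d - 1) (int d - 3 - int n4)" if "3 \<le> d"
  proof -
    have "n4 \<le> d - 3"
      using assms that by linarith
    then have "pieri d n4 ?P (d - 1) (d - 3) = (if 2 \<le> n4 then ?P (d - 3) (d - 1 - n4) else 0)
        + (if 1 \<le> n4 then ?P (d - 2) (d - 2 - n4) else 0) + ?P (d - 1) (d - 3 - n4)"
      by (rule pieri_dual_sig2[OF that])
    then show ?thesis
      using assms that by (simp add: P of_nat_diff diff_diff_eq cong: if_cong)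
  qed
  show ?thesis
    unfolding X integral_cmult_Y[OF assms(1)] X22 using X13 by simp
qed

lemma sig3_coeff_dual_combination:
  fixes d n1 n2 n3 n4 :: int
  assumes "0 \<le> n4" "n4 \<le> n3" "n3 \<le> n2" "n2 \<le> n1" "n1 \<le> d - 1" "n1 + n2 + n3 + n4 = 2 * d - 4"
  shows "6 * sig3_coeff n1 n2 n3 (d - 2) (d - 2 - n4)
      - 2 * (if 3 \<le> d then
               (if 2 \<le> n4 then sig3_coeff n1 n2 n3 (d - 3) (d - 1 - n4) else 0)
             + (if 1 \<le> n4 then sig3_coeff n1 n2 n3 (d - 2) (d - 2 - n4) else 0)
             + sig3_coeff n1 n2 n3 (d - 1) (d - 3 - n4)
             else 0)
    = (if n1 = n2 \<and> n2 = n3 \<and> n3 = n4 then 6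
       else if n1 = n2 \<and> n2 \<noteq> n3 \<and> n3 = n4 then 4
       else if n1 + n4 = n2 + n3 \<and> n1 \<noteq> n2 then 2
       else if n1 = n2 + n3 + n4 + 2 then -2
       else 0)"
proof -
  consider "n1 = d - 1" | "n1 \<le> d - 2" "n1 + n4 \<le> d - 2" | "n1 \<le> d - 2" "n1 + n4 > d - 2"
    using assms by linarith
  then show ?thesis
    by cases (use assms in \<open>auto simp: sig3_coeff_def max_def min_def\<close>)
qed

theorem lemma4p12:
  fixes d n1 n2 n3 n4 :: nat
  assumes "d \<ge> 2"
    and "n1 \<ge> n2" and "n2 \<ge> n3" and "n3 \<ge> n4"
    and "n1 + n2 + n3 + n4 = 2 * d - 4"
  shows "integral_gr d
           (cmult d (cmult d (cmult d (cmult d (sig d n1) (sig d n2)) (sig d n3)) (sig d n4))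
              (csub (cscale 8 (schub d 1 1)) (cscale 2 (cmult d (sig d 1) (sig d 1)))))
         = (if n1 = n2 \<and> n2 = n3 \<and> n3 = n4 then 6
            else if n1 = n2 \<and> n2 \<noteq> n3 \<and> n3 = n4 then 4
            else if n1 + n4 = n2 + n3 \<and> n1 \<noteq> n2 then 2
            else if n1 = n2 + n3 + n4 + 2 then -2
            else 0)"
proof (cases "n1 \<le> d - 1")
  case True
  have "int n4 \<le> int n3" "int n3 \<le> int n2" "int n2 \<le> int n1" "int n1 \<le> int d - 1"
    "int n1 + int n2 + int n3 + int n4 = 2 * int d - 4"
    using assms True by linarith+
  from sig3_coeff_dual_combination[OF of_nat_0_le_iff this] show ?thesis
    unfolding integral_sig4_cmult_Y[OF assms True] by simp
next
  case False
  then have "sig d n1 = (\<lambda>_ _. 0)"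
    by (simp add: schub_invalid valid_def)
  moreover have "n1 \<noteq> n2" "n1 + n4 \<noteq> n2 + n3" "n1 \<noteq> n2 + n3 + n4 + 2"
    using assms False by linarith+
  ultimately show ?thesis
    by (simp add: cmult_zero_left integral_gr_def)
qed

end
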